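(* Let $f(x)=\operatorname{dist}(x,\mathbb{Z})=\min(x-\lfloor x\rfloor,\ \lfloor x\rfloor+1-x)$ for $x\in\mathbb{R}$. Then $f$ is continuous and $(f(ku+v))_{k\ge1}\in\mathcal{G}$ for all $u>0$ and all $v>0$.
   Context: A sequence of real numbers $(a_k)_{k\ge1}$ is called pointwise good (written $(a_k)\in\mathcal{G}$) if for every measure preserving flow $(U_t)_{t\in\mathbb{R}}$ on a probability space $(X,\mathcal{B},\mu)$ (a measurable action of $\mathbb{R}$ by measure preserving transformations) and every $F\in L^\infty(X,\mu)$, the averages $\frac1n\sum_{k=1}^n F(U_{a_k}x)$ converge for $\mu$-almost every $x$ as $n\to\infty$. *)

theory Defs
  imports "HOL-Probability.Probability"
begin

definition distZ :: "real \<Rightarrow> real" where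
  "distZ x = min (x - real_of_int \<lfloor>x\<rfloor>) (real_of_int \<lfloor>x\<rfloor> + 1 - x)"

definition mp_flow :: "'a measure \<Rightarrow> (real \<Rightarrow> 'a \<Rightarrow> 'a) \<Rightarrow> bool" where
  "mp_flow M U \<longleftrightarrow>
     (\<lambda>(t, x). U t x) \<in> measurable (borel \<Otimes>\<^sub>M M) M \<and>
     (\<forall>x\<in>space M. U 0 x = x) \<and>
     (\<forall>s t. \<forall>x\<in>space M. U (s + t) x = U s (U t x)) \<and>
     (\<forall>t. distr M M (U t) = M)"

definition Linfty :: "'a measure \<Rightarrow> ('a \<Rightarrow> real) set" where
  "Linfty M = {F. F \<in> borel_measurable M \<and> (\<exists>C. AE x in M. \<bar>F x\<bar> \<le> C)}"

text \<open>Since a free type variable in a theorem is universally quantified, a theorem stating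
  pointwise_good TYPE('a) a for arbitrary 'a expresses membership in the class G.\<close>
definition pointwise_good :: "'a itself \<Rightarrow> (nat \<Rightarrow> real) \<Rightarrow> bool" where
  "pointwise_good _ a \<longleftrightarrow>
     (\<forall>(M :: 'a measure) U F. prob_space M \<and> mp_flow M U \<and> F \<in> Linfty M \<longrightarrow>
        (AE x in M. convergent (\<lambda>n. (1 / real n) * (\<Sum>k=1..n. F (U (a k) x)))))"

end

theory Submission
  imports Defs
begin

text \<open>
  Write \<open>\<theta>\<^sub>k = frac (k u + v)\<close>.  Then \<open>a\<^sub>k = \<theta>\<^sub>k\<close> if \<open>\<theta>\<^sub>k < 1/2\<close> and
  \<open>a\<^sub>k = 1 - \<theta>\<^sub>k\<close> otherwise, so \<open>F (U a\<^sub>k x)\<close> is a sum of two windowed observables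
  \<open>W r x = F (U r x) \<cdot> 1\<^bsub>[a,b)\<^esub> r\<close> evaluated at \<open>r = \<theta>\<^sub>k\<close> (the second one for the reversed flow
  and \<open>F \<circ> U 1\<close>).  Averages of \<open>W (s + k u mod 1) x\<close> are Birkhoff averages of the skew product
  \<open>(s, x) \<mapsto> (s + u mod 1, x)\<close> on circle \<open>\<times>\<close> X, so they converge for almost every s and x.
  To reach the given angle \<open>frac v\<close>, take a good angle \<open>s = frac v + \<delta>\<close> with \<delta> small and
  replace x by \<open>U (-\<delta>) x\<close>: the two averages differ only at indices k with \<open>\<theta>\<^sub>k\<close> within \<delta>
  to the left of a window end, and these have density at most 3/L once \<delta> is small
  (orbit_window_count).  Letting L tend to infinity gives convergence.

  The argument works for all real u and v.
\<close>

definition birkhoff_sum :: "('b \<Rightarrow> 'b) \<Rightarrow> ('b \<Rightarrow> real) \<Rightarrow> nat \<Rightarrow> 'b \<Rightarrow> real" where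
  "birkhoff_sum T h n y = (\<Sum>k<n. h ((T^^k) y))"

lemma funpow_measurable: "T \<in> measurable N N \<Longrightarrow> (T^^k) \<in> measurable N N"
  by (induction k) (auto simp: funpow_Suc_right intro: measurable_comp)

lemma birkhoff_sum_0 [simp]: "birkhoff_sum T h 0 y = 0"
  by (simp add: birkhoff_sum_def)

lemma birkhoff_sum_Suc_shift: "birkhoff_sum T h (Suc n) y = h y + birkhoff_sum T h n (T y)"
  unfolding birkhoff_sum_def
  by (subst sum.lessThan_Suc_shift) (simp add: funpow_Suc_right del: funpow.simps)

lemma birkhoff_sum_const_diff:
  shows "birkhoff_sum T (\<lambda>y. h y - c) n y = birkhoff_sum T h n y - real n * c"
    and "birkhoff_sum T (\<lambda>y. c - h y) n y = real n * c - birkhoff_sum T h n y"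
  unfolding birkhoff_sum_def by (simp_all add: sum_subtractf)

lemma birkhoff_sum_measurable [measurable]:
  assumes "T \<in> measurable N N" "h \<in> borel_measurable N"
  shows "birkhoff_sum T h n \<in> borel_measurable N"
proof -
  have "(\<lambda>y. h ((T^^k) y)) \<in> borel_measurable N" for k
    using measurable_comp[OF funpow_measurable[OF assms(1)] assms(2)] by (simp add: comp_def)
  then show ?thesis unfolding birkhoff_sum_def by (intro borel_measurable_sum) auto
qed

lemma birkhoff_sum_bound:
  assumes "T \<in> measurable N N" "\<forall>y\<in>space N. \<bar>h y\<bar> \<le> B" "y \<in> space N"
  shows "\<bar>birkhoff_sum T h n y\<bar> \<le> real n * B"
proof -
  have "\<bar>birkhoff_sum T h n y\<bar> \<le> (\<Sum>k<n. \<bar>h ((T^^k) y)\<bar>)"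
    unfolding birkhoff_sum_def by (rule sum_abs)
  also have "\<dots> \<le> (\<Sum>k<n. B)"
    using assms(2) measurable_space[OF funpow_measurable[OF assms(1)] assms(3)]
    by (intro sum_mono) blast
  finally show ?thesis by simp
qed

definition running_max :: "('b \<Rightarrow> 'b) \<Rightarrow> ('b \<Rightarrow> real) \<Rightarrow> nat \<Rightarrow> 'b \<Rightarrow> real" where
  "running_max T h n y = Max ((\<lambda>k. birkhoff_sum T h k y) ` {..n})"

lemma running_max_ge: "k \<le> n \<Longrightarrow> birkhoff_sum T h k y \<le> running_max T h n y"
  unfolding running_max_def by (intro Max_ge) auto

lemma running_max_nonneg: "0 \<le> running_max T h n y"
  using running_max_ge[of 0 n T h y] by simp

lemma running_max_attained: "\<exists>k\<le>n. running_max T h n y = birkhoff_sum T h k y"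
proof -
  have "running_max T h n y \<in> (\<lambda>k. birkhoff_sum T h k y) ` {..n}"
    unfolding running_max_def by (intro Max_in) auto
  then show ?thesis by auto
qed

lemma running_max_mono:
  assumes "m \<le> n"
  shows "running_max T h m y \<le> running_max T h n y"
proof -
  obtain k where "k \<le> m" "running_max T h m y = birkhoff_sum T h k y"
    using running_max_attained[of m T h y] by blast
  then show ?thesis using running_max_ge[of k n T h y] assms by simp
qed

lemma running_max_pos_iff:
  "(\<exists>n. 0 < running_max T h n y) \<longleftrightarrow> (\<exists>n. 0 < birkhoff_sum T h n y)"
proof
  assume "\<exists>n. 0 < running_max T h n y"
  then obtain n where n: "0 < running_max T h n y" by blast
  obtain k where "running_max T h n y = birkhoff_sum T h k y"
    using running_max_attained[of n T h y] by blast
  with n show "\<exists>n. 0 < birkhoff_sum T h n y" by auto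
next
  assume "\<exists>n. 0 < birkhoff_sum T h n y"
  then obtain n where "0 < birkhoff_sum T h n y" by blast
  then show "\<exists>n. 0 < running_max T h n y"
    using running_max_ge[of n n T h y] by (auto intro!: exI[of _ n])
qed

lemma running_max_measurable [measurable]:
  assumes "T \<in> measurable N N" "h \<in> borel_measurable N"
  shows "running_max T h n \<in> borel_measurable N"
  unfolding running_max_def using assms by (intro borel_measurable_Max) auto

lemma running_max_bound:
  assumes "T \<in> measurable N N" "\<forall>y\<in>space N. \<bar>h y\<bar> \<le> B" "y \<in> space N"
  shows "\<bar>running_max T h n y\<bar> \<le> real n * \<bar>B\<bar>"
proof -
  obtain k where k: "k \<le> n" "running_max T h n y = birkhoff_sum T h k y"
    using running_max_attained[of n T h y] by blast
  have "\<bar>birkhoff_sum T h k y\<bar> \<le> real k * B" by (rule birkhoff_sum_bound[OF assms])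
  also have "\<dots> \<le> real k * \<bar>B\<bar>" by (intro mult_left_mono) auto
  also have "\<dots> \<le> real n * \<bar>B\<bar>" using k(1) by (intro mult_right_mono) auto
  finally show ?thesis using k by simp
qed

text \<open>The combinatorial heart of the maximal ergodic theorem (Garsia's argument):
  where the running maximum is positive it is attained at a positive time, so
  dropping the first step costs at most h y.\<close>

lemma running_max_step:
  "running_max T h n y - running_max T h n (T y)
     \<le> h y * indicator {y. 0 < running_max T h n y} y"
proof (cases "0 < running_max T h n y")
  case True
  obtain k where k: "k \<le> n" "running_max T h n y = birkhoff_sum T h k y"
    using running_max_attained[of n T h y] by blast
  with True obtain j where j: "k = Suc j" by (cases k) auto
  have "running_max T h n y = h y + birkhoff_sum T h j (T y)"
    using k j birkhoff_sum_Suc_shift by simp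
  also have "\<dots> \<le> h y + running_max T h n (T y)"
    using running_max_ge[of j n T h "T y"] k j by simp
  finally show ?thesis using True by simp
next
  case False
  then show ?thesis
    using running_max_nonneg[of T h n y] running_max_nonneg[of T h n "T y"] by simp
qed

lemma bounded_integrable:
  fixes f :: "'a \<Rightarrow> real"
  assumes "finite_measure N" "f \<in> borel_measurable N" "\<forall>y\<in>space N. \<bar>f y\<bar> \<le> B"
  shows "integrable N f"
proof -
  interpret finite_measure N by fact
  show ?thesis using assms(2,3) by (intro integrable_const_bound[where B=B] AE_I2) auto
qed

text \<open>Maximal ergodic inequality at a finite horizon: integrate the step inequality
  and use that the running maximum and its translate by T have the same integral.\<close>

lemma maximal_ergodic_finite:
  assumes N: "prob_space N" and T: "T \<in> measurable N N" "distr N N T = N"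
    and h: "h \<in> borel_measurable N" "\<forall>y\<in>space N. \<bar>h y\<bar> \<le> B"
  shows "0 \<le> (\<integral>y. h y * indicator {y\<in>space N. 0 < running_max T h n y} y \<partial>N)"
proof -
  interpret prob_space N by fact
  let ?M = "running_max T h n"
  let ?E = "{y\<in>space N. 0 < ?M y}"
  have Ty: "T y \<in> space N" if "y \<in> space N" for y by (rule measurable_space[OF T(1) that])
  have int_M: "integrable N ?M"
    using running_max_bound[OF T(1) h(2)] T h
    by (intro bounded_integrable[where B="real n * \<bar>B\<bar>"]) auto
  have int_MT: "integrable N (\<lambda>y. ?M (T y))"
    using running_max_bound[OF T(1) h(2) Ty] T h
    by (intro bounded_integrable[where B="real n * \<bar>B\<bar>"]) auto
  have int_h: "integrable N (\<lambda>y. h y * indicator ?E y)"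
    using h T by (intro bounded_integrable[where B="\<bar>B\<bar>"]) (auto simp: indicator_def)
  have "(\<integral>y. ?M (T y) \<partial>N) = (\<integral>y. ?M y \<partial>distr N N T)"
    using T h by (intro integral_distr[symmetric]) auto
  also have "\<dots> = (\<integral>y. ?M y \<partial>N)" using T(2) by simp
  finally have "0 = (\<integral>y. ?M y - ?M (T y) \<partial>N)"
    using int_M int_MT by simp
  also have "\<dots> \<le> (\<integral>y. h y * indicator ?E y \<partial>N)"
  proof (intro integral_mono Bochner_Integration.integrable_diff int_M int_MT int_h)
    fix y assume "y \<in> space N"
    then show "?M y - ?M (T y) \<le> h y * indicator ?E y"
      using running_max_step[of T h n y] by (simp add: indicator_def)
  qed
  finally show ?thesis .
qed

text \<open>The sets of the finite-horizon
  version increase to this set, so dominated convergence passes to the limit.\<close>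

lemma maximal_ergodic:
  assumes N: "prob_space N" and T: "T \<in> measurable N N" "distr N N T = N"
    and h: "h \<in> borel_measurable N" "\<forall>y\<in>space N. \<bar>h y\<bar> \<le> B"
  shows "0 \<le> (\<integral>y. h y * indicator {y\<in>space N. \<exists>n. 0 < birkhoff_sum T h n y} y \<partial>N)"
proof -
  interpret prob_space N by fact
  define E where "E n = {y\<in>space N. 0 < running_max T h n y}" for n
  define E' where "E' = {y\<in>space N. \<exists>n. 0 < birkhoff_sum T h n y}"
  have E_mono: "y \<in> E m \<Longrightarrow> m \<le> n \<Longrightarrow> y \<in> E n" for y m n
    using running_max_mono[of m n T h y] unfolding E_def by auto
  have E_iff: "(\<exists>n. y \<in> E n) \<longleftrightarrow> y \<in> E'" for y
    using running_max_pos_iff[of T h y] unfolding E_def E'_def by auto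
  have pointwise: "(\<lambda>n. h y * indicator (E n) y) \<longlonglongrightarrow> h y * indicator E' y" for y
  proof (cases "y \<in> E'")
    case True
    then obtain m where "y \<in> E m" using E_iff by blast
    then have "\<forall>n\<ge>m. h y * indicator (E n) y = h y * indicator E' y"
      using True E_mono by simp
    then have "\<forall>\<^sub>F n in sequentially. h y * indicator (E n) y = h y * indicator E' y"
      unfolding eventually_sequentially by blast
    then show ?thesis by (rule tendsto_eventually)
  next
    case False
    then have "y \<notin> E n" for n using E_iff by blast
    then show ?thesis using False by simp
  qed
  have "(\<lambda>n. \<integral>y. h y * indicator (E n) y \<partial>N) \<longlonglongrightarrow> (\<integral>y. h y * indicator E' y \<partial>N)"
  proof (rule integral_dominated_convergence[where w="\<lambda>_. \<bar>B\<bar>"])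
    show "AE y in N. norm (h y * indicator (E n) y) \<le> \<bar>B\<bar>" for n
      using h(2) by (auto intro!: AE_I2 simp: indicator_def)
    show "AE y in N. (\<lambda>n. h y * indicator (E n) y) \<longlonglongrightarrow> h y * indicator E' y"
      using pointwise by simp
    show "(\<lambda>y. h y * indicator E' y) \<in> borel_measurable N"
      unfolding E'_def using T h by measurable
    show "(\<lambda>y. h y * indicator (E n) y) \<in> borel_measurable N" for n
      unfolding E_def using T h by measurable
  qed simp
  moreover have "0 \<le> (\<integral>y. h y * indicator (E n) y \<partial>N)" for n
    unfolding E_def by (rule maximal_ergodic_finite[OF N T h])
  ultimately show ?thesis unfolding E'_def by (intro LIMSEQ_le_const) auto
qed

lemma limsup_liminf_shift_asymptotic:
  fixes X Y :: "nat \<Rightarrow> real"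
  assumes "(\<lambda>n. X n - Y (Suc n)) \<longlonglongrightarrow> 0"
  shows "limsup (\<lambda>n. ereal (X n)) = limsup (\<lambda>n. ereal (Y n))"
    and "liminf (\<lambda>n. ereal (X n)) = liminf (\<lambda>n. ereal (Y n))"
proof -
  have null: "(\<lambda>n. ereal (X n - Y (Suc n))) \<longlonglongrightarrow> ereal 0"
    using assms by simp
  have split: "(\<lambda>n. ereal (X n)) = (\<lambda>n. ereal (X n - Y (Suc n)) + ereal (Y (n + 1)))"
    by simp
  have "limsup (\<lambda>n. ereal (X n)) = ereal 0 + limsup (\<lambda>n. ereal (Y (n + 1)))"
    unfolding split by (rule ereal_limsup_lim_add[OF null]) simp
  then show "limsup (\<lambda>n. ereal (X n)) = limsup (\<lambda>n. ereal (Y n))"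
    using limsup_shift[of "\<lambda>n. ereal (Y n)"] by simp
  have "liminf (\<lambda>n. ereal (X n)) = ereal 0 + liminf (\<lambda>n. ereal (Y (n + 1)))"
    unfolding split by (rule ereal_liminf_lim_add[OF null]) simp
  then show "liminf (\<lambda>n. ereal (X n)) = liminf (\<lambda>n. ereal (Y n))"
    using liminf_shift[of "\<lambda>n. ereal (Y n)"] by simp
qed

lemma frequently_above_below:
  fixes X :: "nat \<Rightarrow> real"
  shows "ereal b < limsup (\<lambda>n. ereal (X n)) \<Longrightarrow> \<exists>n\<ge>N. b < X n"
    and "liminf (\<lambda>n. ereal (X n)) < ereal a \<Longrightarrow> \<exists>n\<ge>N. X n < a"
proof -
  assume b: "ereal b < limsup (\<lambda>n. ereal (X n))"
  show "\<exists>n\<ge>N. b < X n"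
  proof (rule ccontr)
    assume "\<not> (\<exists>n\<ge>N. b < X n)"
    then have "\<forall>\<^sub>F n in sequentially. ereal (X n) \<le> ereal b"
      unfolding eventually_sequentially by (auto simp: not_less)
    then have "limsup (\<lambda>n. ereal (X n)) \<le> ereal b" by (rule Limsup_bounded)
    with b show False by simp
  qed
next
  assume a: "liminf (\<lambda>n. ereal (X n)) < ereal a"
  show "\<exists>n\<ge>N. X n < a"
  proof (rule ccontr)
    assume "\<not> (\<exists>n\<ge>N. X n < a)"
    then have "\<forall>\<^sub>F n in sequentially. ereal a \<le> ereal (X n)"
      unfolding eventually_sequentially by (auto simp: not_less)
    then have "ereal a \<le> liminf (\<lambda>n. ereal (X n))" by (rule Liminf_bounded)
    with a show False by simp
  qed
qed

lemma bounded_nonconvergent_oscillates: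
  fixes X :: "nat \<Rightarrow> real"
  assumes bound: "\<forall>n. \<bar>X n\<bar> \<le> B" and nonconv: "\<not> convergent X"
  shows "\<exists>a\<in>\<rat>. \<exists>b\<in>\<rat>. a < b \<and>
    liminf (\<lambda>n. ereal (X n)) < ereal a \<and> ereal b < limsup (\<lambda>n. ereal (X n))"
proof -
  let ?l = "liminf (\<lambda>n. ereal (X n))" and ?L = "limsup (\<lambda>n. ereal (X n))"
  have "?l \<le> ?L" by (rule Liminf_le_Limsup) simp
  have bounds: "- B \<le> X n" "X n \<le> B" for n
    using bound[rule_format, of n] by linarith+
  have lower: "ereal (- B) \<le> ?l"
    using bounds by (intro Liminf_bounded always_eventually) simp
  have upper: "?L \<le> ereal B"
    using bounds by (intro Limsup_bounded always_eventually) simp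
  have "?l < ?L"
  proof (rule ccontr)
    assume "\<not> ?l < ?L"
    with \<open>?l \<le> ?L\<close> have eq: "?L = ?l" by simp
    obtain p where p: "?L = ereal p" using lower upper \<open>?l \<le> ?L\<close> by (cases ?L) auto
    have "X \<longlonglongrightarrow> p" using p eq by (intro limsup_le_liminf_real) auto
    with nonconv show False by (auto simp: convergent_def)
  qed
  then obtain x where x: "?l < ereal x" "ereal x < ?L" using ereal_dense2 by blast
  then obtain y where y: "ereal x < ereal y" "ereal y < ?L" using ereal_dense2 by blast
  obtain a where a: "a \<in> \<rat>" "x < a" "a < y" using Rats_dense_in_real y(1) by auto
  obtain b where b: "b \<in> \<rat>" "a < b" "b < y" using Rats_dense_in_real a(3) by auto
  have "?l < ereal a" using x(1) a(2) by (meson ereal_less_eq(3) less_le_trans less_imp_le)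
  moreover have "ereal b < ?L" using y(2) b(3) by (meson ereal_less_eq(3) le_less_trans less_imp_le)
  ultimately show ?thesis using a(1) b(1,2) by blast
qed

definition birkhoff_avg :: "('b \<Rightarrow> 'b) \<Rightarrow> ('b \<Rightarrow> real) \<Rightarrow> nat \<Rightarrow> 'b \<Rightarrow> real" where
  "birkhoff_avg T h n y = birkhoff_sum T h n y / real n"

lemma birkhoff_avg_bound:
  assumes "T \<in> measurable N N" "\<forall>y\<in>space N. \<bar>h y\<bar> \<le> B" "y \<in> space N"
  shows "\<bar>birkhoff_avg T h n y\<bar> \<le> \<bar>B\<bar>"
proof (cases "n = 0")
  case False
  have "\<forall>y\<in>space N. \<bar>h y\<bar> \<le> \<bar>B\<bar>" using assms(2) by force
  then have "\<bar>birkhoff_sum T h n y\<bar> \<le> real n * \<bar>B\<bar>"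
    using birkhoff_sum_bound[OF assms(1) _ assms(3)] by blast
  then show ?thesis using False by (simp add: birkhoff_avg_def abs_divide field_simps)
qed (simp add: birkhoff_avg_def)

lemma birkhoff_avg_shift:
  assumes T: "T \<in> measurable N N" and h: "\<forall>y\<in>space N. \<bar>h y\<bar> \<le> B" and y: "y \<in> space N"
    and n: "n \<ge> 1"
  shows "\<bar>birkhoff_avg T h n (T y) - birkhoff_avg T h (Suc n) y\<bar> \<le> 2 * \<bar>B\<bar> / real n"
proof -
  define S where "S = birkhoff_sum T h n (T y)"
  have h_abs: "\<forall>y\<in>space N. \<bar>h y\<bar> \<le> \<bar>B\<bar>" using h by force
  have S: "\<bar>S\<bar> \<le> real n * \<bar>B\<bar>"
    using birkhoff_sum_bound[OF T h_abs measurable_space[OF T y]] unfolding S_def .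
  have "\<bar>h y\<bar> \<le> \<bar>B\<bar>" using h_abs y by blast
  then have hy: "\<bar>real n * h y\<bar> \<le> real n * \<bar>B\<bar>"
    by (simp add: abs_mult mult_left_mono)
  have "birkhoff_avg T h n (T y) - birkhoff_avg T h (Suc n) y
      = (S - real n * h y) / (real n * (real n + 1))"
    using n by (simp add: birkhoff_avg_def birkhoff_sum_Suc_shift S_def field_simps)
  also have "\<bar>\<dots>\<bar> = \<bar>S - real n * h y\<bar> / (real n * (real n + 1))"
    by (simp add: abs_divide)
  also have "\<dots> \<le> (real n * (2 * \<bar>B\<bar>)) / (real n * (real n + 1))"
    using S hy by (intro divide_right_mono) auto
  also have "\<dots> = 2 * \<bar>B\<bar> / (real n + 1)"
    using n by simp
  also have "\<dots> \<le> 2 * \<bar>B\<bar> / real n"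
    using n by (intro divide_left_mono) auto
  finally show ?thesis .
qed

lemma birkhoff_sum_invariant_indicator:
  assumes T: "T \<in> measurable N N" and inv: "\<forall>y\<in>space N. T y \<in> D \<longleftrightarrow> y \<in> D"
    and y: "y \<in> space N"
  shows "birkhoff_sum T (\<lambda>y. h y * indicator D y) n y = indicator D y * birkhoff_sum T h n y"
proof -
  have "(T^^k) y \<in> D \<longleftrightarrow> y \<in> D" for k
  proof (induction k)
    case (Suc k)
    have "(T^^k) y \<in> space N" using measurable_space[OF funpow_measurable[OF T] y] .
    then show ?case using Suc inv by simp
  qed simp
  then show ?thesis
    unfolding birkhoff_sum_def by (simp add: sum_distrib_left indicator_def)
qed

lemma maximal_ergodic_invariant:
  assumes N: "prob_space N" and T: "T \<in> measurable N N" "distr N N T = N"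
    and h: "h \<in> borel_measurable N" "\<forall>y\<in>space N. \<bar>h y\<bar> \<le> B"
    and D: "D \<in> sets N" "\<forall>y\<in>space N. T y \<in> D \<longleftrightarrow> y \<in> D"
    and pos: "\<forall>y\<in>D. \<exists>n. 0 < birkhoff_sum T h n y"
  shows "0 \<le> (\<integral>y. h y * indicator D y \<partial>N)"
proof -
  let ?hD = "\<lambda>y. h y * indicator D y"
  note sums = birkhoff_sum_invariant_indicator[OF T(1) D(2)]
  have "{y\<in>space N. \<exists>n. 0 < birkhoff_sum T ?hD n y} = D"
  proof (intro set_eqI iffI)
    fix y assume "y \<in> {y\<in>space N. \<exists>n. 0 < birkhoff_sum T ?hD n y}"
    then obtain n where "y \<in> space N" "0 < birkhoff_sum T ?hD n y" by blast
    then show "y \<in> D" using sums[of y h n] by (cases "y \<in> D") auto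
  next
    fix y assume y: "y \<in> D"
    then have "y \<in> space N" using sets.sets_into_space[OF D(1)] by blast
    moreover obtain n where "0 < birkhoff_sum T h n y" using pos y by blast
    ultimately show "y \<in> {y\<in>space N. \<exists>n. 0 < birkhoff_sum T ?hD n y}"
      using sums[of y h n] y by (auto intro!: exI[of _ n])
  qed
  moreover have "\<forall>y\<in>space N. \<bar>?hD y\<bar> \<le> \<bar>B\<bar>"
    using h(2) by (auto simp: indicator_def)
  ultimately have "0 \<le> (\<integral>y. ?hD y * indicator D y \<partial>N)"
    using maximal_ergodic[OF N T, of ?hD "\<bar>B\<bar>"] h(1) D(1) by simp
  also have "(\<lambda>y. ?hD y * indicator D y) = ?hD"
    by (auto simp: indicator_def)
  finally show ?thesis .
qed

definition oscillation_set ::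
  "'b measure \<Rightarrow> ('b \<Rightarrow> 'b) \<Rightarrow> ('b \<Rightarrow> real) \<Rightarrow> real \<Rightarrow> real \<Rightarrow> 'b set" where
  "oscillation_set N T h a b = {y\<in>space N.
     liminf (\<lambda>n. ereal (birkhoff_avg T h n y)) < ereal a \<and>
     ereal b < limsup (\<lambda>n. ereal (birkhoff_avg T h n y))}"

lemma oscillation_set_measurable [measurable]:
  assumes [measurable]: "T \<in> measurable N N" "h \<in> borel_measurable N"
  shows "oscillation_set N T h a b \<in> sets N"
  unfolding oscillation_set_def birkhoff_avg_def by measurable

lemma oscillation_set_invariant:
  assumes T: "T \<in> measurable N N" and h: "\<forall>y\<in>space N. \<bar>h y\<bar> \<le> B" and y: "y \<in> space N"
  shows "T y \<in> oscillation_set N T h a b \<longleftrightarrow> y \<in> oscillation_set N T h a b"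
proof -
  have "(\<lambda>n. birkhoff_avg T h n (T y) - birkhoff_avg T h (Suc n) y) \<longlonglongrightarrow> 0"
  proof (rule Lim_null_comparison)
    show "\<forall>\<^sub>F n in sequentially.
        norm (birkhoff_avg T h n (T y) - birkhoff_avg T h (Suc n) y) \<le> 2 * \<bar>B\<bar> / real n"
      using birkhoff_avg_shift[OF T h y] unfolding eventually_sequentially by auto
    show "(\<lambda>n. 2 * \<bar>B\<bar> / real n) \<longlonglongrightarrow> 0" by (rule lim_const_over_n)
  qed
  from limsup_liminf_shift_asymptotic[OF this] show ?thesis
    using y measurable_space[OF T y] unfolding oscillation_set_def by simp
qed

text \<open>Oscillation sets are null: on such an invariant set the maximal ergodic theorem
  gives both \<open>b \<cdot> \<mu>(D) \<le> \<integral>\<^sub>D h\<close> and \<open>\<integral>\<^sub>D h \<le> a \<cdot> \<mu>(D)\<close>.\<close>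

lemma oscillation_set_null:
  assumes N: "prob_space N" and T: "T \<in> measurable N N" "distr N N T = N"
    and h: "h \<in> borel_measurable N" "\<forall>y\<in>space N. \<bar>h y\<bar> \<le> B" and ab: "a < b"
  shows "emeasure N (oscillation_set N T h a b) = 0"
proof -
  interpret prob_space N by fact
  let ?D = "oscillation_set N T h a b"
  have D: "?D \<in> sets N" "\<forall>y\<in>space N. T y \<in> ?D \<longleftrightarrow> y \<in> ?D"
    using oscillation_set_invariant[OF T(1) h(2)] T h by auto
  have bound: "\<forall>y\<in>space N. \<bar>h y - c\<bar> \<le> \<bar>B\<bar> + \<bar>c\<bar>" "\<forall>y\<in>space N. \<bar>c - h y\<bar> \<le> \<bar>B\<bar> + \<bar>c\<bar>"
    for c using h(2) by (auto simp: abs_le_iff)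
  have above: "0 \<le> (\<integral>y. (h y - b) * indicator ?D y \<partial>N)"
  proof (rule maximal_ergodic_invariant[OF N T _ bound(1) D])
    show "\<forall>y\<in>?D. \<exists>n. 0 < birkhoff_sum T (\<lambda>y. h y - b) n y"
    proof
      fix y assume "y \<in> ?D"
      then obtain n where n: "n \<ge> 1" "b < birkhoff_avg T h n y"
        using frequently_above_below(1)[where X="\<lambda>n. birkhoff_avg T h n y" and N=1]
        unfolding oscillation_set_def by blast
      then show "\<exists>n. 0 < birkhoff_sum T (\<lambda>y. h y - b) n y"
        by (auto simp: birkhoff_sum_const_diff birkhoff_avg_def field_simps)
    qed
  qed (use h in simp)
  have below: "0 \<le> (\<integral>y. (a - h y) * indicator ?D y \<partial>N)"
  proof (rule maximal_ergodic_invariant[OF N T _ bound(2) D])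
    show "\<forall>y\<in>?D. \<exists>n. 0 < birkhoff_sum T (\<lambda>y. a - h y) n y"
    proof
      fix y assume "y \<in> ?D"
      then obtain n where n: "n \<ge> 1" "birkhoff_avg T h n y < a"
        using frequently_above_below(2)[where X="\<lambda>n. birkhoff_avg T h n y" and N=1]
        unfolding oscillation_set_def by blast
      then show "\<exists>n. 0 < birkhoff_sum T (\<lambda>y. a - h y) n y"
        by (auto simp: birkhoff_sum_const_diff birkhoff_avg_def field_simps)
    qed
  qed (use h in simp)
  have int: "integrable N (\<lambda>y. (h y - c) * indicator ?D y)"
    "integrable N (\<lambda>y. (c - h y) * indicator ?D y)" for c
    using bound[of c] h(1) D(1)
    by (auto intro!: bounded_integrable[where B="\<bar>B\<bar> + \<bar>c\<bar>"] simp: indicator_def)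
  have "(\<integral>y. (h y - b) * indicator ?D y \<partial>N) + (\<integral>y. (a - h y) * indicator ?D y \<partial>N)
      = (\<integral>y. (a - b) * indicator ?D y \<partial>N)"
    by (subst Bochner_Integration.integral_add[symmetric, OF int(1) int(2)])
      (auto intro!: Bochner_Integration.integral_cong simp: algebra_simps)
  also have "\<dots> = (a - b) * measure N ?D"
    using sets.sets_into_space[OF D(1)] by (simp add: Int_absorb2)
  finally have "0 \<le> (a - b) * measure N ?D" using above below by linarith
  then have "measure N ?D = 0"
    using ab measure_nonneg[of N ?D] by (simp add: zero_le_mult_iff)
  then show ?thesis by (simp add: emeasure_eq_measure)
qed

theorem birkhoff_bounded:
  assumes N: "prob_space N" and T: "T \<in> measurable N N" "distr N N T = N"
    and h: "h \<in> borel_measurable N" "\<forall>y\<in>space N. \<bar>h y\<bar> \<le> B"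
  shows "AE y in N. convergent (\<lambda>n. birkhoff_avg T h n y)"
proof -
  have null: "AE y in N. a < b \<longrightarrow> y \<notin> oscillation_set N T h a b" for a b
    using AE_not_in[of "oscillation_set N T h a b" N] oscillation_set_null[OF N T h]
      oscillation_set_measurable[OF T(1) h(1)]
    by (intro AE_impI) (auto simp: null_sets_def)
  have "AE y in N. \<forall>a\<in>\<rat>. \<forall>b\<in>\<rat>. a < b \<longrightarrow> y \<notin> oscillation_set N T h a b"
    using null by (simp add: AE_ball_countable countable_rat)
  then show ?thesis
  proof (rule AE_mp, intro AE_I2 impI)
    fix y assume y: "y \<in> space N"
      and no_osc: "\<forall>a\<in>\<rat>. \<forall>b\<in>\<rat>. a < b \<longrightarrow> y \<notin> oscillation_set N T h a b"
    show "convergent (\<lambda>n. birkhoff_avg T h n y)"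
    proof (rule ccontr)
      assume "\<not> convergent (\<lambda>n. birkhoff_avg T h n y)"
      with birkhoff_avg_bound[OF T(1) h(2) y] obtain a b where "a \<in> \<rat>" "b \<in> \<rat>" "a < b"
        "y \<in> oscillation_set N T h a b"
        using bounded_nonconvergent_oscillates[of "\<lambda>n. birkhoff_avg T h n y"] y
        unfolding oscillation_set_def by blast
      with no_osc show False by blast
    qed
  qed
qed

definition cesaro_avg :: "(nat \<Rightarrow> real) \<Rightarrow> nat \<Rightarrow> real" where
  "cesaro_avg f n = 1 / real n * (\<Sum>k=1..n. f k)"

text \<open>The circle \<open>\<real>/\<int>\<close>, realised as [0,1) with Lebesgue measure, and its rotations.\<close>

definition circle :: "real measure" where
  "circle = uniform_measure lborel {0..<1}"

lemma prob_space_circle: "prob_space circle"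
  unfolding circle_def by (rule prob_space_uniform_measure) simp_all

lemma sets_circle [simp, measurable_cong]: "sets circle = sets borel"
  by (simp add: circle_def)

lemma space_circle [simp]: "space circle = UNIV"
  by (simp add: circle_def)

lemma emeasure_circle: "A \<in> sets borel \<Longrightarrow> emeasure circle A = emeasure lborel ({0..<1} \<inter> A)"
  unfolding circle_def by (subst emeasure_uniform_measure) (auto simp: divide_ennreal_def)

lemma frac_measurable [measurable]: "(frac :: real \<Rightarrow> real) \<in> borel_measurable borel"
  unfolding frac_def by measurable

lemma emeasure_lborel_translate:
  assumes "B \<in> sets borel"
  shows "emeasure lborel ((\<lambda>s::real. t + s) -` B) = emeasure lborel B"
proof -
  have "emeasure lborel B = emeasure (distr lborel borel ((+) t)) B"
    by (simp add: lborel_distr_plus)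
  also have "\<dots> = emeasure lborel ((+) t -` B \<inter> space lborel)"
    using assms by (subst emeasure_distr) auto
  finally show ?thesis by simp
qed

lemma frac_add_unit:
  assumes "0 \<le> s" "s < 1" "0 \<le> c" "c < 1"
  shows "frac (s + c) = (if s + c < 1 then s + c else s + c - 1)"
proof (cases "s + c < 1")
  case False
  then have "frac (s + c - 1 + 1) = s + c - 1"
    using assms by (subst frac_1_eq) (simp add: frac_eq)
  then show ?thesis using False by simp
qed (use assms in \<open>simp add: frac_eq\<close>)

text \<open>Rotations preserve the measure on the circle: the preimage of A splits into two
  translates of pieces of A.\<close>

lemma rotation_preserves_circle: "distr circle circle (\<lambda>s. frac (s + u)) = circle"
proof (rule measure_eqI)
  show "sets (distr circle circle (\<lambda>s. frac (s + u))) = sets circle" by simp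
  fix A assume "A \<in> sets (distr circle circle (\<lambda>s. frac (s + u)))"
  then have A: "A \<in> sets borel" by simp
  define c where "c = frac u"
  have c: "0 \<le> c" "c < 1" unfolding c_def by (simp_all add: frac_lt_1)
  have rot: "frac (s + u) = (if s + c < 1 then s + c else s + c - 1)" if "0 \<le> s" "s < 1" for s
    using frac_add_unit[OF that c] unfolding c_def by simp
  have shift_meas: "(\<lambda>s. t + s) -` B \<in> sets lborel" if "B \<in> sets borel" for B and t :: real
    using measurable_sets[of "\<lambda>s. t + s" lborel borel B] that by simp
  have meas: "(\<lambda>s. frac (s + u)) \<in> measurable circle circle" by measurable
  have "emeasure (distr circle circle (\<lambda>s. frac (s + u))) A
      = emeasure lborel ({0..<1} \<inter> (\<lambda>s. frac (s + u)) -` A)"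
    using A measurable_sets[OF meas, of A] by (simp add: emeasure_distr[OF meas] emeasure_circle)
  also have "{0..<1} \<inter> (\<lambda>s. frac (s + u)) -` A =
      (\<lambda>s. c + s) -` (A \<inter> {c..<1}) \<union> (\<lambda>s. (c - 1) + s) -` (A \<inter> {0..<c})"
    using rot c by (auto split: if_splits simp: algebra_simps)
  also have "emeasure lborel \<dots> = emeasure lborel ((\<lambda>s. c + s) -` (A \<inter> {c..<1}))
      + emeasure lborel ((\<lambda>s. (c - 1) + s) -` (A \<inter> {0..<c}))"
    using A by (intro plus_emeasure[symmetric] shift_meas) auto
  also have "\<dots> = emeasure lborel (A \<inter> {c..<1}) + emeasure lborel (A \<inter> {0..<c})"
    using emeasure_lborel_translate[of "A \<inter> {c..<1}" c]
      emeasure_lborel_translate[of "A \<inter> {0..<c}" "c - 1"] A by simp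
  also have "\<dots> = emeasure lborel ({0..<1} \<inter> A)"
    using A c by (subst plus_emeasure) (auto intro!: arg_cong[where f="emeasure lborel"])
  also have "\<dots> = emeasure circle A" using A by (simp add: emeasure_circle)
  finally show "emeasure (distr circle circle (\<lambda>s. frac (s + u))) A = emeasure circle A" .
qed

lemma AE_circle_unit_interval: "AE s in circle. 0 \<le> s \<and> s < 1"
proof -
  have "emeasure circle (UNIV - {0..<1}) = 0"
    by (simp add: emeasure_circle)
  then show ?thesis
    by (intro AE_I[where N="UNIV - {0..<1}"]) auto
qed

lemma skew_rotation_preserving:
  assumes M: "prob_space M"
  shows "distr (circle \<Otimes>\<^sub>M M) (circle \<Otimes>\<^sub>M M) (\<lambda>y. (frac (fst y + u), snd y)) = circle \<Otimes>\<^sub>M M"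
proof -
  have "distr circle circle (\<lambda>s. frac (s + u)) \<Otimes>\<^sub>M distr M M (\<lambda>x. x)
      = distr (circle \<Otimes>\<^sub>M M) (circle \<Otimes>\<^sub>M M) (\<lambda>(s, x). (frac (s + u), x))"
    by (rule pair_measure_distr) (auto simp: M prob_space_imp_sigma_finite)
  then show ?thesis
    unfolding rotation_preserves_circle distr_id by (simp add: case_prod_beta')
qed

lemma rotation_skew_birkhoff:
  fixes M :: "'a measure"
  assumes M: "prob_space M"
    and K[measurable]: "(\<lambda>(r, x). K r x) \<in> borel_measurable (borel \<Otimes>\<^sub>M M)"
    and K_bound: "\<forall>r. \<forall>x\<in>space M. \<bar>K r x\<bar> \<le> B"
  shows "AE s in circle. AE x in M. convergent (cesaro_avg (\<lambda>k. K (frac (s + real k * u)) x))"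
proof -
  interpret CM: pair_prob_space circle M
    by (simp add: pair_prob_space_def pair_sigma_finite_def prob_space_circle M
        prob_space_imp_sigma_finite)
  define T where "T = (\<lambda>y :: real \<times> 'a. (frac (fst y + u), snd y))"
  define g where "g = (\<lambda>y :: real \<times> 'a. K (frac (fst y + u)) (snd y))"
  have T_meas: "T \<in> measurable (circle \<Otimes>\<^sub>M M) (circle \<Otimes>\<^sub>M M)" unfolding T_def by measurable
  have g_meas: "g \<in> borel_measurable (circle \<Otimes>\<^sub>M M)" unfolding g_def by measurable
  have g_bound: "\<forall>y\<in>space (circle \<Otimes>\<^sub>M M). \<bar>g y\<bar> \<le> B"
    using K_bound by (auto simp: g_def space_pair_measure)
  have T_preserving: "distr (circle \<Otimes>\<^sub>M M) (circle \<Otimes>\<^sub>M M) T = circle \<Otimes>\<^sub>M M"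
    unfolding T_def by (rule skew_rotation_preserving[OF M])
  have iterate: "(T^^k) (s, x) = (frac (s + real k * u), x)" if "0 \<le> s" "s < 1" for k s x
  proof (induction k)
    case 0
    then show ?case using that by (simp add: frac_eq)
  next
    case (Suc k)
    then show ?case by (simp add: T_def algebra_simps)
  qed
  have avg: "birkhoff_avg T g n (s, x) = cesaro_avg (\<lambda>k. K (frac (s + real k * u)) x) n"
    if "0 \<le> s" "s < 1" for n s x
    unfolding birkhoff_avg_def birkhoff_sum_def cesaro_avg_def
    by (simp add: iterate[OF that] g_def sum.atLeast1_atMost_eq algebra_simps)
  have "AE y in circle \<Otimes>\<^sub>M M. convergent (\<lambda>n. birkhoff_avg T g n y)"
    by (rule birkhoff_bounded[OF prob_space_pair[OF prob_space_circle M] T_meas T_preserving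
          g_meas g_bound])
  then have "AE s in circle. AE x in M. convergent (\<lambda>n. birkhoff_avg T g n (s, x))"
    by (rule CM.AE_pair)
  with AE_circle_unit_interval show ?thesis
    by eventually_elim (simp add: avg)
qed

lemma distZ_le: "distZ x \<le> \<bar>x - real_of_int m\<bar>"
proof (cases "m \<le> \<lfloor>x\<rfloor>")
  case True
  then have "real_of_int m \<le> real_of_int \<lfloor>x\<rfloor>" by simp
  then show ?thesis unfolding distZ_def using of_int_floor_le[of x] by linarith
next
  case False
  then have "real_of_int \<lfloor>x\<rfloor> + 1 \<le> real_of_int m" by linarith
  then show ?thesis unfolding distZ_def using real_of_int_floor_add_one_gt[of x] by linarith
qed

lemma distZ_pos: "x \<notin> \<int> \<Longrightarrow> 0 < distZ x"
proof -
  assume x: "x \<notin> \<int>"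
  then have "real_of_int \<lfloor>x\<rfloor> \<noteq> x" by (metis Ints_of_int)
  then have "real_of_int \<lfloor>x\<rfloor> < x" using of_int_floor_le[of x] by linarith
  moreover have "x < real_of_int \<lfloor>x\<rfloor> + 1" by linarith
  ultimately show ?thesis unfolding distZ_def by simp
qed

lemma finite_positive_lower_bound:
  fixes f :: "'b \<Rightarrow> real"
  assumes "finite W" "\<forall>w\<in>W. 0 < f w"
  shows "\<exists>\<delta>>0. \<forall>w\<in>W. \<delta> \<le> f w"
  using assms
proof (induction W rule: finite_induct)
  case (insert w W)
  then obtain \<delta> where "\<delta> > 0" "\<forall>w\<in>W. \<delta> \<le> f w" by auto
  then show ?case using insert.prems by (intro exI[of _ "min \<delta> (f w)"]) auto
qed (intro exI[of _ 1], simp)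

text \<open>A set of integers in {1..n} whose elements are pairwise at distance \<open>\<ge> L\<close> has at most
  n/L + 1 elements: the blocks of length L containing them are distinct.\<close>

lemma separated_card_bound:
  fixes L :: nat
  assumes L: "L \<ge> 1" and S: "S \<subseteq> {1..n}"
    and sep: "\<forall>i\<in>S. \<forall>j\<in>S. i < j \<longrightarrow> i + L \<le> j"
  shows "real (card S) \<le> real n / real L + 1"
proof -
  let ?block = "\<lambda>i. (i - 1) div L"
  have "inj_on ?block S"
  proof (rule linorder_inj_onI)
    fix i j assume "i \<in> S" "j \<in> S" "i < j"
    then have "(i - 1) + L \<le> j - 1" using sep S by force
    then have "(i - 1) div L + 1 \<le> (j - 1) div L"
      using L div_le_mono[of "(i - 1) + L" "j - 1" L] by simp
    then show "?block i \<noteq> ?block j" by simp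
  qed auto
  moreover have "?block ` S \<subseteq> {..(n - 1) div L}"
    using S by (force intro: div_le_mono)
  ultimately have "card S \<le> Suc ((n - 1) div L)"
    using card_inj_on_le[of ?block S "{..(n - 1) div L}"] by simp
  moreover have "real ((n - 1) div L) \<le> real n / real L"
  proof -
    have "real ((n - 1) div L) \<le> real (n - 1) / real L" by (rule of_nat_div_le_of_nat)
    also have "\<dots> \<le> real n / real L" by (simp add: divide_right_mono)
    finally show ?thesis .
  qed
  ultimately show ?thesis by linarith
qed

text \<open>The number of orbit points \<open>frac (k u + v)\<close>, k \<le> n, falling into a short window
  [c - \<delta>, c) is at most n/L + 1, provided \<delta> is small enough depending on L and c.
  If u is rational the orbit is finite and misses short windows altogether; otherwise two
  orbit points in the same short window are at least L steps apart.\<close>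

text \<open>If \<open>q u\<close> is an integer, the orbit \<open>frac (k u + v)\<close> takes at most q values, so some
  left neighbourhood of c contains none of them.\<close>

lemma periodic_orbit_misses_windows:
  fixes u v c :: real and q :: nat
  assumes q: "q \<ge> 1" "real q * u \<in> \<int>"
  shows "\<exists>\<delta>0>0. \<forall>k\<ge>1. \<not> (c - \<delta>0 \<le> frac (real k * u + v) \<and> frac (real k * u + v) < c)"
proof -
  let ?\<theta> = "\<lambda>k::nat. frac (real k * u + v)"
  have periodic: "?\<theta> (k + q) = ?\<theta> k" for k
  proof -
    have "real (k + q) * u + v = (real k * u + v) + real q * u" by (simp add: algebra_simps)
    then show ?thesis using frac_add_int_right[OF q(2), of "real k * u + v"] by (simp add: ac_simps)
  qed
  have in_period: "?\<theta> k \<in> ?\<theta> ` {1..q}" if "k \<ge> 1" for k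
    using that
  proof (induction k rule: less_induct)
    case (less k)
    show ?case
    proof (cases "k \<le> q")
      case False
      then have "?\<theta> k = ?\<theta> (k - q)" using periodic[of "k - q"] by simp
      then show ?thesis using less.IH[of "k - q"] False q(1) by auto
    qed (use less.prems in auto)
  qed
  obtain \<delta>0 where \<delta>0: "\<delta>0 > 0" "\<forall>w\<in>{w\<in>?\<theta> ` {1..q}. w < c}. \<delta>0 \<le> c - w"
    using finite_positive_lower_bound[of "{w\<in>?\<theta> ` {1..q}. w < c}" "\<lambda>w. c - w"] by auto
  have "\<not> (c - \<delta>0 / 2 \<le> ?\<theta> k \<and> ?\<theta> k < c)" if "k \<ge> 1" for k
    using \<delta>0 in_period[OF that] by force
  then show ?thesis using \<delta>0(1) by (intro exI[of _ "\<delta>0 / 2"]) auto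
qed

text \<open>If no multiple \<open>q u\<close> (q \<ge> 1) is an integer, two orbit points in a window of length
  \<open>\<delta> < min\<^sub>j\<^sub><\<^sub>L distZ (j u)\<close> have indices at least L apart.\<close>

lemma aperiodic_orbit_window_count:
  fixes u v c :: real and L :: nat
  assumes L: "L \<ge> 1" and aperiodic: "\<forall>q\<ge>1. real q * u \<notin> \<int>"
  shows "\<exists>\<delta>0>0. \<forall>\<delta> n. 0 < \<delta> \<and> \<delta> < \<delta>0 \<longrightarrow>
    real (card {k\<in>{1..n}. c - \<delta> \<le> frac (real k * u + v) \<and> frac (real k * u + v) < c})
      \<le> real n / real L + 1"
proof -
  let ?\<theta> = "\<lambda>k::nat. frac (real k * u + v)"
  obtain \<delta>0 where \<delta>0: "\<delta>0 > 0" "\<forall>j\<in>{1..<L}. \<delta>0 \<le> distZ (real j * u)"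
    using finite_positive_lower_bound[of "{1..<L}" "\<lambda>j. distZ (real j * u)"] aperiodic distZ_pos
    by force
  have "real (card {k\<in>{1..n}. c - \<delta> \<le> ?\<theta> k \<and> ?\<theta> k < c}) \<le> real n / real L + 1"
    if \<delta>: "0 < \<delta>" "\<delta> < \<delta>0" for \<delta> n
  proof (rule separated_card_bound[OF L])
    let ?S = "{k\<in>{1..n}. c - \<delta> \<le> ?\<theta> k \<and> ?\<theta> k < c}"
    show "\<forall>i\<in>?S. \<forall>j\<in>?S. i < j \<longrightarrow> i + L \<le> j"
    proof (intro ballI impI)
      fix i j assume i: "i \<in> ?S" and j: "j \<in> ?S" and ij: "i < j"
      define m where "m = \<lfloor>real j * u + v\<rfloor> - \<lfloor>real i * u + v\<rfloor>"
      have "real (j - i) * u - real_of_int m = ?\<theta> j - ?\<theta> i"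
        using ij unfolding m_def frac_def by (simp add: of_nat_diff algebra_simps)
      moreover have "\<bar>?\<theta> j - ?\<theta> i\<bar> < \<delta>" using i j by auto
      ultimately have "distZ (real (j - i) * u) < \<delta>"
        using distZ_le[of "real (j - i) * u" m] by linarith
      then have "j - i \<notin> {1..<L}" using \<delta>0 \<delta> by force
      then show "i + L \<le> j" using ij by auto
    qed
  qed auto
  then show ?thesis using \<delta>0(1) by blast
qed

lemma orbit_window_count:
  fixes u v c :: real and L :: nat
  assumes L: "L \<ge> 1"
  shows "\<exists>\<delta>0>0. \<forall>\<delta> n. 0 < \<delta> \<and> \<delta> < \<delta>0 \<longrightarrow>
    real (card {k\<in>{1..n}. c - \<delta> \<le> frac (real k * u + v) \<and> frac (real k * u + v) < c})
      \<le> real n / real L + 1"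
proof (cases "\<exists>q\<ge>1. real q * u \<in> \<int>")
  case True
  then obtain q :: nat where "q \<ge> 1" "real q * u \<in> \<int>" by blast
  from periodic_orbit_misses_windows[OF this, of c v] obtain \<delta>0 where
    \<delta>0: "\<delta>0 > 0" "\<forall>k\<ge>1. \<not> (c - \<delta>0 \<le> frac (real k * u + v) \<and> frac (real k * u + v) < c)"
    by blast
  have "real (card {k\<in>{1..n}. c - \<delta> \<le> frac (real k * u + v) \<and> frac (real k * u + v) < c})
      \<le> real n / real L + 1" if "\<delta> < \<delta>0" for \<delta> n
  proof -
    have empty: "{k\<in>{1..n}. c - \<delta> \<le> frac (real k * u + v) \<and> frac (real k * u + v) < c} = {}"
      using \<delta>0(2) that by force
    show ?thesis unfolding empty by simp
  qed
  then show ?thesis using \<delta>0(1) by blast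
next
  case False
  then show ?thesis using aperiodic_orbit_window_count[OF L] by blast
qed

lemma orbit_window_counts:
  fixes u v :: real and L :: nat and C :: "real set"
  assumes L: "L \<ge> 1" and C: "finite C"
  shows "\<exists>\<delta>0>0. \<forall>\<delta> n. 0 < \<delta> \<and> \<delta> < \<delta>0 \<longrightarrow> (\<forall>c\<in>C.
    real (card {k\<in>{1..n}. c - \<delta> \<le> frac (real k * u + v) \<and> frac (real k * u + v) < c})
      \<le> real n / real L + 1)"
  using C
proof (induction C rule: finite_induct)
  case (insert c C)
  obtain \<delta>1 where \<delta>1: "\<delta>1 > 0" "\<forall>\<delta> n. 0 < \<delta> \<and> \<delta> < \<delta>1 \<longrightarrow>
      real (card {k\<in>{1..n}. c - \<delta> \<le> frac (real k * u + v) \<and> frac (real k * u + v) < c})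
        \<le> real n / real L + 1"
    using orbit_window_count[OF L, of c u v] by blast
  obtain \<delta>2 where \<delta>2: "\<delta>2 > 0" "\<forall>\<delta> n. 0 < \<delta> \<and> \<delta> < \<delta>2 \<longrightarrow> (\<forall>c\<in>C.
      real (card {k\<in>{1..n}. c - \<delta> \<le> frac (real k * u + v) \<and> frac (real k * u + v) < c})
        \<le> real n / real L + 1)"
    using insert.IH by blast
  show ?case
    using \<delta>1 \<delta>2 by (intro exI[of _ "min \<delta>1 \<delta>2"]) auto
qed (intro exI[of _ 1], simp)

lemma convergent_by_approximation:
  fixes c :: "nat \<Rightarrow> real"
  assumes C: "0 \<le> C"
    and approx: "\<forall>L::nat. L \<ge> 1 \<longrightarrow>
      (\<exists>d. convergent d \<and> (\<forall>n\<ge>1. \<bar>c n - d n\<bar> \<le> C / real L + C / real n))"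
  shows "convergent c"
proof -
  have small: "\<exists>N::nat. N \<ge> 1 \<and> (\<forall>n\<ge>N. C / real n < e / 6)" if e: "0 < e" for e :: real
  proof -
    obtain N :: nat where N: "6 * C / e < real N" using reals_Archimedean2 by blast
    have "C / real n < e / 6" if "Suc N \<le> n" for n
    proof -
      have "6 * C / e < real n" using N that by linarith
      then show ?thesis using e that by (simp add: field_simps)
    qed
    then show ?thesis by (intro exI[of _ "Suc N"]) auto
  qed
  have "Cauchy c"
  proof (rule CauchyI)
    fix e :: real assume e: "0 < e"
    obtain L where L: "L \<ge> 1" "\<forall>n\<ge>L. C / real n < e / 6" using small[OF e] by blast
    obtain d where d: "convergent d" "\<forall>n\<ge>1. \<bar>c n - d n\<bar> \<le> C / real L + C / real n"
      using approx L(1) by blast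
    obtain M where M: "\<forall>m\<ge>M. \<forall>n\<ge>M. norm (d m - d n) < e / 6"
      using d(1) e by (metis CauchyD convergent_Cauchy divide_pos_pos zero_less_numeral)
    show "\<exists>M. \<forall>m\<ge>M. \<forall>n\<ge>M. norm (c m - c n) < e"
    proof (intro exI[of _ "max L M"] allI impI)
      fix m n assume m: "max L M \<le> m" and n: "max L M \<le> n"
      have "C / real L < e / 6" "C / real m < e / 6" "C / real n < e / 6"
        using L(2) m n by auto
      moreover have "\<bar>c m - d m\<bar> \<le> C / real L + C / real m" "\<bar>c n - d n\<bar> \<le> C / real L + C / real n"
        using d(2) L(1) m n by auto
      moreover have "\<bar>d m - d n\<bar> < e / 6" using M m n by simp
      ultimately show "norm (c m - c n) < e" unfolding real_norm_def by linarith
    qed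
  qed
  then show ?thesis by (simp add: Cauchy_convergent_iff)
qed

lemma mp_flow_measurable:
  assumes "mp_flow M U"
  shows "U t \<in> measurable M M"
proof -
  have [measurable]: "(\<lambda>(t, x). U t x) \<in> measurable (borel \<Otimes>\<^sub>M M) M"
    using assms by (simp add: mp_flow_def)
  show ?thesis by measurable
qed

lemma mp_flow_preserving: "mp_flow M U \<Longrightarrow> distr M M (U t) = M"
  by (simp add: mp_flow_def)

lemma mp_flow_add: "mp_flow M U \<Longrightarrow> x \<in> space M \<Longrightarrow> U (s + t) x = U s (U t x)"
  by (simp add: mp_flow_def)

lemma mp_flow_reverse:
  assumes U: "mp_flow M U"
  shows "mp_flow M (\<lambda>t. U (- t))"
proof -
  have [measurable]: "(\<lambda>(t, x). U t x) \<in> measurable (borel \<Otimes>\<^sub>M M) M"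
    using U by (simp add: mp_flow_def)
  have "(\<lambda>(t, x). U (- t) x) \<in> measurable (borel \<Otimes>\<^sub>M M) M" by measurable
  moreover have "U (- (s + t)) x = U (- s) (U (- t) x)" if "x \<in> space M" for s t x
    using mp_flow_add[OF U that, of "- s" "- t"] by simp
  moreover have "U 0 x = x" if "x \<in> space M" for x using U that by (simp add: mp_flow_def)
  moreover have "distr M M (U t) = M" for t using U by (simp add: mp_flow_def)
  ultimately show ?thesis unfolding mp_flow_def by simp
qed

definition windowed :: "('a \<Rightarrow> real) \<Rightarrow> (real \<Rightarrow> 'a \<Rightarrow> 'a) \<Rightarrow> real \<Rightarrow> real \<Rightarrow> real \<Rightarrow> 'a \<Rightarrow> real" where
  "windowed F U a b r x = F (U r x) * indicator {a..<b} r"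

lemma windowed_measurable [measurable]:
  assumes "mp_flow M U" and [measurable]: "F \<in> borel_measurable M"
  shows "(\<lambda>(r, x). windowed F U a b r x) \<in> borel_measurable (borel \<Otimes>\<^sub>M M)"
proof -
  have [measurable]: "(\<lambda>(t, x). U t x) \<in> measurable (borel \<Otimes>\<^sub>M M) M"
    using assms by (simp add: mp_flow_def)
  show ?thesis unfolding windowed_def by measurable
qed

text \<open>Times r \<in> [0,1) that lie within \<delta> to the left of one of the points a, b, 1.  Away from
  them, shifting the time by \<delta> (and the point by \<open>U\<^sub>-\<^sub>\<delta>\<close>) does not change the windowed observable.\<close>

definition near_window_ends :: "real \<Rightarrow> real \<Rightarrow> real \<Rightarrow> real \<Rightarrow> bool" where
  "near_window_ends a b \<delta> r \<longleftrightarrow>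
     (a - \<delta> \<le> r \<and> r < a) \<or> (b - \<delta> \<le> r \<and> r < b) \<or> (1 - \<delta> \<le> r \<and> r < 1)"

lemma windowed_shift:
  assumes U: "mp_flow M U" and z: "z \<in> space M" and F: "\<forall>x\<in>space M. \<bar>F x\<bar> \<le> B"
    and r: "0 \<le> r" "r < 1" and \<delta>: "0 < \<delta>"
  shows "\<bar>windowed F U a b r z - windowed F U a b (frac (r + \<delta>)) (U (- \<delta>) z)\<bar>
    \<le> 2 * B * (if near_window_ends a b \<delta> r then 1 else 0)"
proof (cases "near_window_ends a b \<delta> r")
  case True
  have in_space: "U t x \<in> space M" if "x \<in> space M" for t x
    using measurable_space[OF mp_flow_measurable[OF U] that] .
  have bound: "\<bar>windowed F U a b t x\<bar> \<le> B" if "x \<in> space M" for t x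
    using F in_space[OF that] z by (auto simp: windowed_def indicator_def)
  have "\<bar>windowed F U a b r z - windowed F U a b (frac (r + \<delta>)) (U (- \<delta>) z)\<bar>
      \<le> \<bar>windowed F U a b r z\<bar> + \<bar>windowed F U a b (frac (r + \<delta>)) (U (- \<delta>) z)\<bar>"
    by (rule abs_triangle_ineq4)
  moreover have "\<bar>windowed F U a b r z\<bar> \<le> B" using bound[OF z] .
  moreover have "\<bar>windowed F U a b (frac (r + \<delta>)) (U (- \<delta>) z)\<bar> \<le> B"
    using bound[OF in_space[OF z]] .
  ultimately show ?thesis using True by simp
next
  case False
  then have "r + \<delta> < 1" using r unfolding near_window_ends_def by auto
  then have "frac (r + \<delta>) = r + \<delta>" using r \<delta> by (simp add: frac_eq)
  moreover have "U (r + \<delta>) (U (- \<delta>) z) = U r z"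
  proof -
    have "U (r + \<delta> + - \<delta>) z = U (r + \<delta>) (U (- \<delta>) z)" by (rule mp_flow_add[OF U z])
    then show ?thesis by simp
  qed
  moreover have "indicator {a..<b} (r + \<delta>) = (indicator {a..<b} r :: real)"
    using False \<delta> unfolding near_window_ends_def by (auto simp: indicator_def)
  ultimately show ?thesis using False by (simp add: windowed_def)
qed

text \<open>Comparing the averages along the times \<open>\<theta>\<^sub>k\<close> and along the shifted times
  \<open>frac (\<theta>\<^sub>k + \<delta>)\<close>: the terms differ only when \<open>\<theta>\<^sub>k\<close> is near a window end, which
  by the counting hypothesis happens for at most 3 (n/L + 1) indices k \<le> n.\<close>

lemma orbit_average_comparison:
  fixes \<theta> :: "nat \<Rightarrow> real" and L n :: nat
  assumes U: "mp_flow M U" and z: "z \<in> space M" and F: "\<forall>x\<in>space M. \<bar>F x\<bar> \<le> B"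
    and \<theta>: "\<forall>k. 0 \<le> \<theta> k \<and> \<theta> k < 1" and \<delta>: "0 < \<delta>" and n: "n \<ge> 1"
    and count: "\<And>c. c \<in> {a, b, 1} \<Longrightarrow>
      real (card {k\<in>{1..n}. c - \<delta> \<le> \<theta> k \<and> \<theta> k < c}) \<le> real n / real L + 1"
  shows "\<bar>cesaro_avg (\<lambda>k. windowed F U a b (\<theta> k) z) n
          - cesaro_avg (\<lambda>k. windowed F U a b (frac (\<theta> k + \<delta>)) (U (- \<delta>) z)) n\<bar>
    \<le> 6 * B / real L + 6 * B / real n"
proof -
  let ?near = "{k\<in>{1..n}. near_window_ends a b \<delta> (\<theta> k)}"
  let ?W = "\<lambda>c. {k\<in>{1..n}. c - \<delta> \<le> \<theta> k \<and> \<theta> k < c}"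
  let ?d = "\<lambda>k. windowed F U a b (\<theta> k) z - windowed F U a b (frac (\<theta> k + \<delta>)) (U (- \<delta>) z)"
  have B: "0 \<le> B" using F z by force
  have "?near = ?W a \<union> ?W b \<union> ?W 1" unfolding near_window_ends_def by auto
  then have "card ?near \<le> card (?W a) + card (?W b) + card (?W 1)"
    by (metis (no_types, lifting) card_Un_le add_le_mono1 order_trans)
  then have "real (card ?near) \<le> real (card (?W a)) + real (card (?W b)) + real (card (?W 1))"
    by linarith
  also have "\<dots> \<le> 3 * (real n / real L + 1)"
    using count[of a] count[of b] count[of 1] by simp
  finally have near: "real (card ?near) \<le> 3 * (real n / real L + 1)" .
  have term_bound: "\<bar>?d k\<bar> \<le> 2 * B * (if near_window_ends a b \<delta> (\<theta> k) then 1 else 0)" for k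
    using \<theta> windowed_shift[OF U z F _ _ \<delta>, of "\<theta> k" a b] by blast
  have "\<bar>cesaro_avg (\<lambda>k. windowed F U a b (\<theta> k) z) n
          - cesaro_avg (\<lambda>k. windowed F U a b (frac (\<theta> k + \<delta>)) (U (- \<delta>) z)) n\<bar>
      = 1 / real n * \<bar>\<Sum>k=1..n. ?d k\<bar>"
    unfolding cesaro_avg_def sum_subtractf[symmetric] right_diff_distrib[symmetric]
    by (simp add: abs_mult)
  also have "\<dots> \<le> 1 / real n * (\<Sum>k=1..n. 2 * B * (if near_window_ends a b \<delta> (\<theta> k) then 1 else 0))"
    by (intro mult_left_mono order.trans[OF sum_abs] sum_mono term_bound) simp
  also have "\<dots> = 1 / real n * (2 * B * real (card ?near))"
    by (simp add: sum_distrib_left[symmetric] sum.inter_filter[symmetric])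
  also have "\<dots> \<le> 1 / real n * (2 * B * (3 * (real n / real L + 1)))"
    using near B by (intro mult_left_mono) auto
  also have "\<dots> = 6 * B / real L + 6 * B / real n"
    using n by (simp add: field_simps)
  finally show ?thesis .
qed

lemma AE_exists_in_positive_set:
  assumes "AE s in N. P s" "A \<in> sets N" "emeasure N A \<noteq> 0"
  shows "\<exists>s\<in>A. P s"
proof (rule ccontr)
  assume none: "\<not> (\<exists>s\<in>A. P s)"
  obtain Z where Z: "Z \<in> sets N" "emeasure N Z = 0" "{s\<in>space N. \<not> P s} \<subseteq> Z"
    using assms(1) by (auto elim!: AE_E)
  have "A \<subseteq> Z" using none Z(3) sets.sets_into_space[OF assms(2)] by auto
  then have "emeasure N A \<le> emeasure N Z" using Z(1) by (rule emeasure_mono)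
  then show False using Z(2) assms(3) by simp
qed

lemma rotation_good_start_near:
  fixes M :: "'a measure"
  assumes M: "prob_space M"
    and K: "(\<lambda>(r, x). K r x) \<in> borel_measurable (borel \<Otimes>\<^sub>M M)"
    and K_bound: "\<forall>r. \<forall>x\<in>space M. \<bar>K r x\<bar> \<le> B"
    and \<epsilon>: "0 < \<epsilon>" and s0: "0 \<le> s0" "s0 < 1"
  shows "\<exists>s. s0 < s \<and> s < s0 + \<epsilon> \<and>
    (AE x in M. convergent (cesaro_avg (\<lambda>k. K (frac (s + real k * u)) x)))"
proof -
  define \<epsilon>' where "\<epsilon>' = min \<epsilon> (1 - s0)"
  have \<epsilon>': "0 < \<epsilon>'" "\<epsilon>' \<le> \<epsilon>" "s0 + \<epsilon>' \<le> 1" using \<epsilon> s0 unfolding \<epsilon>'_def by auto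
  have "{0..<1} \<inter> {s0<..<s0 + \<epsilon>'} = {s0<..<s0 + \<epsilon>'}" using s0 \<epsilon>' by auto
  then have "emeasure circle {s0<..<s0 + \<epsilon>'} = ennreal \<epsilon>'"
    using \<epsilon>' by (simp add: emeasure_circle)
  then have "emeasure circle {s0<..<s0 + \<epsilon>'} \<noteq> 0" using \<epsilon>' by simp
  from AE_exists_in_positive_set[OF rotation_skew_birkhoff[OF M K K_bound, where u=u] _ this]
  obtain s where "s0 < s" "s < s0 + \<epsilon>'"
    "AE x in M. convergent (cesaro_avg (\<lambda>k. K (frac (s + real k * u)) x))"
    by auto
  then show ?thesis using \<epsilon>' by (intro exI[of _ s]) auto
qed

lemma good_start_transfer:
  assumes U: "mp_flow M U"
    and good: "AE x in M. convergent (cesaro_avg (\<lambda>k. W (frac (s + real k * u)) x))"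
  shows "AE z in M. convergent (cesaro_avg (\<lambda>k.
    W (frac (frac (real k * u + v) + (s - frac v))) (U (- (s - frac v)) z)))"
proof -
  let ?\<delta> = "s - frac v"
  have shifted_angle: "frac (s + real k * u) = frac (frac (real k * u + v) + ?\<delta>)" for k
  proof -
    define m where "m = \<lfloor>real k * u + v\<rfloor> - \<lfloor>v\<rfloor>"
    have "s + real k * u = (frac (real k * u + v) + ?\<delta>) + of_int m"
      unfolding frac_def m_def by simp
    then have "frac (s + real k * u) = frac ((frac (real k * u + v) + ?\<delta>) + of_int m)"
      by (rule arg_cong)
    also have "\<dots> = frac (frac (real k * u + v) + ?\<delta>)"
      by (rule frac_add_int_right) simp
    finally show ?thesis .
  qed
  have "AE z in distr M M (U (- ?\<delta>)). convergent (cesaro_avg (\<lambda>k. W (frac (s + real k * u)) z))"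
    unfolding mp_flow_preserving[OF U] by (rule good)
  then show ?thesis
    unfolding shifted_angle by (rule AE_distrD[OF mp_flow_measurable[OF U]])
qed

text \<open>For each L, almost every windowed Cesaro average along the orbit \<open>frac (k u + v)\<close> is
  within 6B/L + 6B/n of a convergent sequence: shift the starting angle \<open>frac v\<close> by a small
  \<delta> to a good angle s, and move the point by \<open>U\<^sub>-\<^sub>\<delta>\<close>, which preserves the measure.\<close>

lemma windowed_average_approximation:
  fixes M :: "'a measure" and L :: nat
  assumes M: "prob_space M" and U: "mp_flow M U" and F: "F \<in> borel_measurable M"
    and F_bound: "\<forall>x\<in>space M. \<bar>F x\<bar> \<le> B" and L: "L \<ge> 1"
  shows "AE z in M. \<exists>d. convergent d \<and> (\<forall>n\<ge>1.
    \<bar>cesaro_avg (\<lambda>k. windowed F U a b (frac (real k * u + v)) z) n - d n\<bar>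
      \<le> 6 * B / real L + 6 * B / real n)"
proof -
  let ?\<theta> = "\<lambda>k::nat. frac (real k * u + v)"
  let ?W = "windowed F U a b"
  have U_meas: "U t \<in> measurable M M" for t by (rule mp_flow_measurable[OF U])
  have "\<bar>F y\<bar> \<le> \<bar>B\<bar>" if "y \<in> space M" for y using F_bound that by force
  then have W_bound: "\<forall>r. \<forall>x\<in>space M. \<bar>?W r x\<bar> \<le> \<bar>B\<bar>"
    using measurable_space[OF U_meas] by (auto simp: windowed_def indicator_def)
  obtain \<delta>0 where \<delta>0: "\<delta>0 > 0" and count: "\<forall>\<delta> n. 0 < \<delta> \<and> \<delta> < \<delta>0 \<longrightarrow> (\<forall>c\<in>{a, b, 1}.
      real (card {k\<in>{1..n}. c - \<delta> \<le> ?\<theta> k \<and> ?\<theta> k < c}) \<le> real n / real L + 1)"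
    using orbit_window_counts[OF L, of "{a, b, 1}" u v] by auto
  have v: "0 \<le> frac v" "frac v < 1" by (simp_all add: frac_lt_1)
  obtain s where s: "frac v < s" "s < frac v + \<delta>0"
    and good: "AE x in M. convergent (cesaro_avg (\<lambda>k. ?W (frac (s + real k * u)) x))"
    using rotation_good_start_near[OF M windowed_measurable[OF U F] W_bound \<delta>0 v, of u] by blast
  define \<delta> where "\<delta> = s - frac v"
  have \<delta>: "0 < \<delta>" "\<delta> < \<delta>0" using s unfolding \<delta>_def by auto
  have "AE z in M. convergent (cesaro_avg (\<lambda>k. ?W (frac (?\<theta> k + \<delta>)) (U (- \<delta>) z)))"
    using good_start_transfer[OF U good] unfolding \<delta>_def by simp
  then show ?thesis
  proof (rule AE_mp, intro AE_I2 impI)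
    fix z assume z: "z \<in> space M"
      and conv: "convergent (cesaro_avg (\<lambda>k. ?W (frac (?\<theta> k + \<delta>)) (U (- \<delta>) z)))"
    have "\<bar>cesaro_avg (\<lambda>k. ?W (?\<theta> k) z) n - cesaro_avg (\<lambda>k. ?W (frac (?\<theta> k + \<delta>)) (U (- \<delta>) z)) n\<bar>
        \<le> 6 * \<bar>B\<bar> / real L + 6 * \<bar>B\<bar> / real n" if "n \<ge> 1" for n
    proof (rule orbit_average_comparison[OF U z _ _ \<delta>(1) that])
      show "real (card {k\<in>{1..n}. c - \<delta> \<le> ?\<theta> k \<and> ?\<theta> k < c}) \<le> real n / real L + 1"
        if "c \<in> {a, b, 1}" for c
        using count \<delta> that by blast
      show "\<forall>x\<in>space M. \<bar>F x\<bar> \<le> \<bar>B\<bar>" using F_bound by force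
    qed (simp add: frac_lt_1)
    moreover have "B \<ge> 0" using F_bound z by force
    ultimately show "\<exists>d. convergent d \<and> (\<forall>n\<ge>1.
        \<bar>cesaro_avg (\<lambda>k. ?W (?\<theta> k) z) n - d n\<bar> \<le> 6 * B / real L + 6 * B / real n)"
      using conv by (intro exI[of _ "cesaro_avg (\<lambda>k. ?W (frac (?\<theta> k + \<delta>)) (U (- \<delta>) z))"]) simp
  qed
qed

lemma windowed_averages_converge:
  fixes M :: "'a measure"
  assumes M: "prob_space M" and U: "mp_flow M U" and F: "F \<in> borel_measurable M"
    and F_bound: "\<forall>x\<in>space M. \<bar>F x\<bar> \<le> B"
  shows "AE z in M. convergent (cesaro_avg (\<lambda>k. windowed F U a b (frac (real k * u + v)) z))"
proof -
  have F_bound': "\<forall>x\<in>space M. \<bar>F x\<bar> \<le> \<bar>B\<bar>" using F_bound by force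
  have "AE z in M. \<forall>L::nat. L \<ge> 1 \<longrightarrow> (\<exists>d. convergent d \<and> (\<forall>n\<ge>1.
      \<bar>cesaro_avg (\<lambda>k. windowed F U a b (frac (real k * u + v)) z) n - d n\<bar>
        \<le> 6 * \<bar>B\<bar> / real L + 6 * \<bar>B\<bar> / real n))"
    unfolding AE_all_countable
    using windowed_average_approximation[OF M U F F_bound'] by (auto intro: AE_impI)
  then show ?thesis
    by eventually_elim (rule convergent_by_approximation[of "6 * \<bar>B\<bar>"], auto)
qed

lemma distZ_attained: "\<exists>m. distZ y = \<bar>y - real_of_int m\<bar>"
proof (cases "y - real_of_int \<lfloor>y\<rfloor> \<le> real_of_int \<lfloor>y\<rfloor> + 1 - y")
  case True
  then have "distZ y = \<bar>y - real_of_int \<lfloor>y\<rfloor>\<bar>" unfolding distZ_def by simp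
  then show ?thesis by blast
next
  case False
  then have "distZ y = \<bar>y - real_of_int (\<lfloor>y\<rfloor> + 1)\<bar>" unfolding distZ_def by simp
  then show ?thesis by blast
qed

lemma distZ_lipschitz: "\<bar>distZ x - distZ y\<bar> \<le> \<bar>x - y\<bar>"
proof -
  have "distZ x \<le> distZ y + \<bar>x - y\<bar>" for x y
  proof -
    obtain m where "distZ y = \<bar>y - real_of_int m\<bar>" using distZ_attained by blast
    then show ?thesis using distZ_le[of x m] by linarith
  qed
  from this[of x y] this[of y x] show ?thesis by linarith
qed

lemma distZ_continuous: "continuous_on UNIV distZ"
  by (rule lipschitz_on_continuous_on[where L=1], rule lipschitz_onI)
    (auto simp: dist_real_def distZ_lipschitz)

lemma distZ_frac: "distZ y = (if frac y < 1/2 then frac y else 1 - frac y)"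
  unfolding distZ_def frac_def by auto

lemma distZ_flow_split:
  assumes U: "mp_flow M U" and x: "x \<in> space M"
  shows "F (U (distZ y) x) = windowed F U 0 (1/2) (frac y) x
    + windowed (\<lambda>x. F (U 1 x)) (\<lambda>t. U (- t)) (1/2) 1 (frac y) x"
proof -
  have "0 \<le> frac y" "frac y < 1" by (simp_all add: frac_lt_1)
  moreover have "U 1 (U (- frac y) x) = U (1 - frac y) x"
    using mp_flow_add[OF U x, of 1 "- frac y"] by simp
  ultimately show ?thesis
    by (auto simp: distZ_frac windowed_def indicator_def)
qed

lemma distZ_orbit_good_bounded:
  fixes M :: "'a measure"
  assumes M: "prob_space M" and U: "mp_flow M U" and F: "F \<in> borel_measurable M"
    and F_bound: "\<forall>x\<in>space M. \<bar>F x\<bar> \<le> B"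
  shows "AE x in M. convergent (cesaro_avg (\<lambda>k. F (U (distZ (real k * u + v)) x)))"
proof -
  let ?G = "\<lambda>x. F (U 1 x)"
  have U1: "U 1 \<in> measurable M M" by (rule mp_flow_measurable[OF U])
  have G: "?G \<in> borel_measurable M" using measurable_comp[OF U1 F] by (simp add: comp_def)
  have G_bound: "\<forall>x\<in>space M. \<bar>?G x\<bar> \<le> B" using F_bound measurable_space[OF U1] by blast
  have lower: "AE x in M. convergent (cesaro_avg (\<lambda>k. windowed F U 0 (1/2) (frac (real k * u + v)) x))"
    by (rule windowed_averages_converge[OF M U F F_bound])
  have upper: "AE x in M. convergent (cesaro_avg (\<lambda>k.
      windowed ?G (\<lambda>t. U (- t)) (1/2) 1 (frac (real k * u + v)) x))"
    by (rule windowed_averages_converge[OF M mp_flow_reverse[OF U] G G_bound])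
  have split: "cesaro_avg (\<lambda>k. F (U (distZ (real k * u + v)) x))
      = (\<lambda>n. cesaro_avg (\<lambda>k. windowed F U 0 (1/2) (frac (real k * u + v)) x) n
          + cesaro_avg (\<lambda>k. windowed ?G (\<lambda>t. U (- t)) (1/2) 1 (frac (real k * u + v)) x) n)"
    if "x \<in> space M" for x
    unfolding distZ_flow_split[OF U that] cesaro_avg_def
    by (simp add: sum.distrib distrib_left)
  from lower upper AE_space show ?thesis
    by eventually_elim (subst split, auto intro: convergent_add)
qed

text \<open>To show that a sequence is pointwise good it suffices to consider bounded (rather than
  essentially bounded) observables: an essentially bounded function agrees with a bounded one
  along almost every countable orbit.\<close>

lemma pointwise_good_from_bounded:
  fixes a :: "nat \<Rightarrow> real"
  assumes bounded_good: "\<And>(M :: 'a measure) U F B. prob_space M \<Longrightarrow> mp_flow M U \<Longrightarrow>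
    F \<in> borel_measurable M \<Longrightarrow> \<forall>x\<in>space M. \<bar>F x\<bar> \<le> B \<Longrightarrow>
    AE x in M. convergent (cesaro_avg (\<lambda>k. F (U (a k) x)))"
  shows "pointwise_good TYPE('a) a"
  unfolding pointwise_good_def
proof (intro allI impI, elim conjE)
  fix M :: "'a measure" and U F
  assume M: "prob_space M" and U: "mp_flow M U" and F_Linfty: "F \<in> Linfty M"
  then obtain C where F[measurable]: "F \<in> borel_measurable M" and F_ess: "AE x in M. \<bar>F x\<bar> \<le> C"
    unfolding Linfty_def by blast
  define F' where "F' x = (if \<bar>F x\<bar> \<le> C then F x else 0)" for x
  have F': "F' \<in> borel_measurable M" unfolding F'_def by measurable
  have F'_bound: "\<forall>x\<in>space M. \<bar>F' x\<bar> \<le> \<bar>C\<bar>" by (auto simp: F'_def)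
  have "AE x in distr M M (U t). \<bar>F x\<bar> \<le> C" for t
    unfolding mp_flow_preserving[OF U] by (rule F_ess)
  then have "AE x in M. \<bar>F (U t x)\<bar> \<le> C" for t
    by (rule AE_distrD[OF mp_flow_measurable[OF U]])
  then have "AE x in M. \<forall>k. \<bar>F (U (a k) x)\<bar> \<le> C"
    unfolding AE_all_countable by blast
  then have "AE x in M. \<forall>k. F (U (a k) x) = F' (U (a k) x)"
    by eventually_elim (simp add: F'_def)
  with bounded_good[OF M U F' F'_bound]
  show "AE x in M. convergent (\<lambda>n. 1 / real n * (\<Sum>k = 1..n. F (U (a k) x)))"
    by eventually_elim (simp add: cesaro_avg_def[abs_def])
qed

theorem mainTheorem3:
  shows "continuous_on UNIV distZ \<and>
    (\<forall>u v :: real. u > 0 \<and> v > 0 \<longrightarrow>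
       pointwise_good TYPE('a) (\<lambda>k. distZ (real k * u + v)))"
proof (intro conjI allI impI)
  show "continuous_on UNIV distZ" by (rule distZ_continuous)
  fix u v :: real
  show "pointwise_good TYPE('a) (\<lambda>k. distZ (real k * u + v))"
    by (rule pointwise_good_from_bounded, rule distZ_orbit_good_bounded)
qed

end
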